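(* Let $a>1$ and $b>1$ be irrational numbers, let $a_n=[an]$, $b_n=[bn]$, $a'_n=[a^{-1}n]$ and $b'_n=[b^{-1}n]$. Then for every positive integer $k$ the series $\sum_{n=1}^\infty \left( \frac{a_{n+k}}{a_n}-\frac{b_{n+k}}{b_n} \right)$ converges and \begin{align*} \sum_{n=1}^\infty \left( \frac{a_{n+k}}{a_n}-\frac{b_{n+k}}{b_n} \right)=\;& k\left( \log a -\log b\right) + \sum_{j=1}^{k}\left(\left\{ j\{ a \}\right\} - \left\{ j\{ b \}\right\}\right)\\ &-\sum_{n=1}^{\infty} \frac{ak\{ a^{-1} (n+1) \}-bk\{ b^{-1} (n+1) \}}{n(n+1)}\\ &-\sum_{n=1}^{\infty} \frac{\sum_{j=1}^k\{ \{ a\} (a'_{n+1}+j) \}-\sum_{j=1}^k\{ \{ b\} (b'_{n+1}+j) \}}{n(n+1)}. \end{align*}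
   Context: $[x]$ is the greatest integer not exceeding $x$ and $\{x\}=x-[x]$. *)

theory Defs
  imports "HOL-Analysis.Analysis"
begin

end

theory Submission
  imports Defs
begin

(* Write A q = floor (a q) and p n = floor (n / a). For irrational a > 1, p is the counting
   function of the Beatty sequence A: it grows by one exactly when n passes a value A q, and
   p (A Q + 1) = Q. This allows summation by parts between the two sequences. With
     e n = a k {n / a} + (SUM j = 1..k. {{a} (p n + j)}) = k n + a k (k + 1) / 2 - (SUM j = 1..k. A (p n + j))
   and D Q = (SUM q = 1..Q. A (q + k) / A q - 1) one has e (n + 1) = e n + k - n (D (p (n + 1)) - D (p n)).
   Dividing by n (n + 1) and telescoping up to A Q gives
     D Q - k H Q = e 1 + k (H (A Q) - H Q) - (SUM n = 1..A Q. e (n + 1) / (n (n + 1))) - e (A Q + 1) / (A Q + 1).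
   As e is bounded and H (A Q) - H Q tends to log a, the series of A (n + k) / A n - 1 - k / n
   converges to k + k log a + (SUM j = 1..k. {j {a}}) - (SUM n. e (n + 1) / (n (n + 1))).
   The theorem is the difference of these identities for a and b. *)

definition beatty :: "real \<Rightarrow> nat \<Rightarrow> nat" where
  "beatty a n = nat \<lfloor>a * real n\<rfloor>"

lemma of_nat_beatty: "a \<ge> 0 \<Longrightarrow> real (beatty a n) = of_int \<lfloor>a * real n\<rfloor>"
  by (simp add: beatty_def)

lemma le_beatty: "a \<ge> 1 \<Longrightarrow> n \<le> beatty a n"
proof -
  assume "a \<ge> 1"
  then have "real n \<le> a * real n" by (simp add: mult_le_cancel_right1)
  then show ?thesis unfolding beatty_def by (simp add: le_nat_iff le_floor_iff)
qed

lemma filterlim_beatty_at_top: "a \<ge> 1 \<Longrightarrow> filterlim (beatty a) at_top sequentially"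
  by (rule filterlim_at_top_mono[OF filterlim_ident]) (use le_beatty in auto)

lemma beatty_div_tendsto:
  assumes "a \<ge> 0"
  shows "(\<lambda>n. real (beatty a n) / real n) \<longlonglongrightarrow> a"
proof (rule tendsto_sandwich[where f="\<lambda>n. a - 1 / real n" and h="\<lambda>n. a"])
  show "\<forall>\<^sub>F n in sequentially. a - 1 / real n \<le> real (beatty a n) / real n"
    using eventually_gt_at_top[of 0]
  proof eventually_elim
    case (elim n)
    have "a * real n - 1 \<le> real (beatty a n)"
      using of_nat_beatty[OF assms] floor_correct[of "a * real n"] by simp
    then have "(a * real n - 1) / real n \<le> real (beatty a n) / real n"
      by (rule divide_right_mono) simp
    then show ?case using elim by (simp add: diff_divide_distrib)
  qed
  show "\<forall>\<^sub>F n in sequentially. real (beatty a n) / real n \<le> a"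
    using eventually_gt_at_top[of 0]
  proof eventually_elim
    case (elim n)
    have "real (beatty a n) \<le> a * real n"
      using of_nat_beatty[OF assms] floor_correct[of "a * real n"] by simp
    then show ?case using elim by (simp add: field_simps)
  qed
  show "(\<lambda>n. a - 1 / real n) \<longlonglongrightarrow> a"
    using tendsto_diff[OF tendsto_const[of a] lim_const_over_n[of 1]] by simp
qed simp

lemma harm_diff_tendsto_ln:
  fixes f :: "nat \<Rightarrow> nat"
  assumes "filterlim f at_top sequentially" "(\<lambda>n. real (f n) / real n) \<longlonglongrightarrow> c" "c > 0"
  shows "(\<lambda>n. harm (f n) - harm n :: real) \<longlonglongrightarrow> ln c"
proof -
  have "(\<lambda>n. (harm (f n) - ln (real (f n))) - (harm n - ln (real n)) + ln (real (f n) / real n))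
      \<longlonglongrightarrow> euler_mascheroni - euler_mascheroni + ln c"
    by (intro tendsto_intros filterlim_compose[OF euler_mascheroni_LIMSEQ assms(1)]
        euler_mascheroni_LIMSEQ assms(2,3)) (use assms(3) in simp)
  moreover have "\<forall>\<^sub>F n in sequentially.
      (harm (f n) - ln (real (f n))) - (harm n - ln (real n)) + ln (real (f n) / real n)
      = harm (f n) - harm n"
    using eventually_gt_at_top[of 0] eventually_compose_filterlim[OF eventually_gt_at_top[of 0] assms(1)]
    by eventually_elim (simp add: ln_div)
  ultimately show ?thesis by (simp add: Lim_transform_eventually)
qed

lemma irrational_mult_of_nat_neq_of_int:
  assumes "a \<notin> \<rat>" "q > 0"
  shows "a * real q \<noteq> of_int z"
proof
  assume "a * real q = of_int z"
  then have "a = of_int z / real q" using assms(2) by (simp add: field_simps)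
  then show False using assms(1) by simp
qed

lemma beatty_inverse_Suc_cases:
  assumes "a > 1" "a \<notin> \<rat>"
  obtains "beatty (inverse a) (Suc n) = beatty (inverse a) n"
  | "beatty (inverse a) (Suc n) = Suc (beatty (inverse a) n)"
    "beatty a (beatty (inverse a) (Suc n)) = n"
proof -
  define x where "x = inverse a * real n"
  have y: "inverse a * real (Suc n) = x + inverse a" unfolding x_def by (simp add: algebra_simps)
  have ia: "0 < inverse a" "inverse a < 1" using assms(1) by (auto simp: inverse_less_1_iff)
  have x0: "\<lfloor>x\<rfloor> \<ge> 0" unfolding x_def using assms(1) by simp
  have "\<lfloor>x\<rfloor> \<le> \<lfloor>x + inverse a\<rfloor>" using ia by (intro floor_mono) simp
  moreover have "\<lfloor>x + inverse a\<rfloor> \<le> \<lfloor>x\<rfloor> + 1"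
    unfolding floor_le_iff of_int_add of_int_1 using ia floor_correct[of x] by linarith
  ultimately consider "\<lfloor>x + inverse a\<rfloor> = \<lfloor>x\<rfloor>" | "\<lfloor>x + inverse a\<rfloor> = \<lfloor>x\<rfloor> + 1" by linarith
  then show ?thesis
  proof cases
    case 1
    then show ?thesis using that(1) unfolding beatty_def x_def y by simp
  next
    case 2
    define q where "q = nat (\<lfloor>x\<rfloor> + 1)"
    have q: "real q = of_int \<lfloor>x + inverse a\<rfloor>" "q > 0" using 2 x0 unfolding q_def by simp_all
    have "real n < a * real q" "a * real q \<le> real n + 1"
      using q(1) 2 floor_correct[of x] floor_correct[of "x + inverse a"] assms(1)
      by (simp_all add: x_def field_simps)
    moreover have "a * real q \<noteq> of_int (int n + 1)"
      by (rule irrational_mult_of_nat_neq_of_int[OF assms(2) q(2)])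
    ultimately have "\<lfloor>a * real q\<rfloor> = int n" by (simp add: floor_eq_iff)
    then have "beatty a q = n" by (simp add: beatty_def)
    moreover have "beatty (inverse a) (Suc n) = q"
      unfolding beatty_def q_def y 2 ..
    moreover have "q = Suc (beatty (inverse a) n)"
      unfolding beatty_def x_def[symmetric] q_def using x0 by (simp add: nat_add_distrib)
    ultimately show ?thesis using that(2) by simp
  qed
qed

lemma beatty_inverse_Suc_beatty:
  assumes "a > 1" "a \<notin> \<rat>"
  shows "beatty (inverse a) (Suc (beatty a q)) = q"
proof (cases "q = 0")
  case True
  then show ?thesis using assms(1) by (simp add: beatty_def inverse_less_1_iff)
next
  case False
  have A: "real (beatty a q) = of_int \<lfloor>a * real q\<rfloor>" using assms(1) by (simp add: of_nat_beatty)
  have "a * real q \<noteq> of_int \<lfloor>a * real q\<rfloor>"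
    using irrational_mult_of_nat_neq_of_int[OF assms(2)] False by simp
  then have "real (beatty a q) < a * real q" "a * real q < real (beatty a q) + 1"
    using A floor_correct[of "a * real q"] by linarith+
  then have "real q < inverse a * real (Suc (beatty a q))"
      "inverse a * real (Suc (beatty a q)) < real q + 1"
    using assms(1) by (simp_all add: field_simps)
  then have "\<lfloor>inverse a * real (Suc (beatty a q))\<rfloor> = int q" by (simp add: floor_eq_iff)
  then show ?thesis by (simp add: beatty_def[of "inverse a"])
qed

lemma frac_frac_mult_of_nat:
  fixes x :: "'a::floor_ceiling"
  shows "frac (frac x * of_nat m) = frac (x * of_nat m)"
proof -
  have "frac x * of_nat m = x * of_nat m + of_int (- \<lfloor>x\<rfloor> * int m)"
    by (simp add: frac_def algebra_simps)
  then show ?thesis by (simp only: frac_add_of_int_right)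
qed

definition beatty_error :: "real \<Rightarrow> nat \<Rightarrow> nat \<Rightarrow> real" where
  "beatty_error a k n = a * real k * frac (inverse a * real n)
     + (\<Sum>j=1..k. frac (frac a * (real_of_int \<lfloor>inverse a * real n\<rfloor> + real j)))"

lemma beatty_error_eq:
  assumes "a > 0"
  shows "beatty_error a k n = real k * real n + a * (\<Sum>j=1..k. real j)
           - (\<Sum>j=1..k. real (beatty a (beatty (inverse a) n + j)))"
proof -
  define p where "p = beatty (inverse a) n"
  have p: "real_of_int \<lfloor>inverse a * real n\<rfloor> = real p"
    unfolding p_def using assms by (simp add: of_nat_beatty)
  have "frac (frac a * (real p + real j)) = a * real p + a * real j - real (beatty a (p + j))" for j
    using frac_frac_mult_of_nat[of a "p + j"] assms
    by (simp add: frac_def of_nat_beatty algebra_simps)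
  then have "beatty_error a k n = a * real k * (inverse a * real n - real p)
      + (\<Sum>j=1..k. a * real p + a * real j - real (beatty a (p + j)))"
    unfolding beatty_error_def p by (simp add: frac_def p[symmetric])
  also have "\<dots> = real k * real n + a * (\<Sum>j=1..k. real j) - (\<Sum>j=1..k. real (beatty a (p + j)))"
    using assms by (simp add: sum.distrib sum_subtractf sum_distrib_left algebra_simps)
  finally show ?thesis unfolding p_def .
qed

lemma sum_frac_le_card: "(\<Sum>j\<in>A. frac (f j)) \<le> real (card A)"
proof -
  have "(\<Sum>j\<in>A. frac (f j)) \<le> (\<Sum>j\<in>A. 1)" by (intro sum_mono) (simp add: less_imp_le frac_lt_1)
  then show ?thesis by simp
qed

lemma abs_sum_frac_diff_le: "\<bar>(\<Sum>j\<in>A. frac (f j)) - (\<Sum>j\<in>A. frac (g j))\<bar> \<le> real (card A)"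
  using sum_frac_le_card[of f A] sum_frac_le_card[of g A]
    sum_nonneg[of A "\<lambda>j. frac (f j)"] sum_nonneg[of A "\<lambda>j. frac (g j)"]
  unfolding abs_le_iff by simp

lemma mult_frac_le: "c \<ge> 0 \<Longrightarrow> c * frac x \<le> c"
  by (simp add: mult_left_le less_imp_le frac_lt_1)

lemma abs_mult_frac_diff_le:
  assumes "c \<ge> 0" "d \<ge> 0"
  shows "\<bar>c * frac x - d * frac y\<bar> \<le> c + d"
proof -
  have "0 \<le> c * frac x" "0 \<le> d * frac y" using assms by simp_all
  then show ?thesis using mult_frac_le[OF assms(1), of x] mult_frac_le[OF assms(2), of y]
    unfolding abs_le_iff by linarith
qed

lemma beatty_error_bounds:
  assumes "a > 0"
  shows "0 \<le> beatty_error a k n" "beatty_error a k n \<le> a * real k + real k"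
proof -
  let ?s = "\<Sum>j=1..k. frac (frac a * (real_of_int \<lfloor>inverse a * real n\<rfloor> + real j))"
  have "0 \<le> ?s" "?s \<le> real k" using sum_frac_le_card[of _ "{1..k}"] by (auto intro: sum_nonneg)
  moreover have "0 \<le> a * real k * frac (inverse a * real n)" using assms by simp
  moreover have "a * real k * frac (inverse a * real n) \<le> a * real k"
    by (rule mult_frac_le) (use assms in simp)
  ultimately show "0 \<le> beatty_error a k n" "beatty_error a k n \<le> a * real k + real k"
    unfolding beatty_error_def by linarith+
qed

lemma beatty_error_1:
  assumes "a > 1"
  shows "beatty_error a k 1 = real k + (\<Sum>j=1..k. frac (real j * frac a))"
proof -
  have "0 < inverse a" "inverse a < 1" using assms by (auto simp: inverse_less_1_iff)
  then have "\<lfloor>inverse a\<rfloor> = 0" "frac (inverse a) = inverse a" by (simp_all add: floor_eq_iff frac_eq)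
  then show ?thesis using assms unfolding beatty_error_def by (simp add: mult.commute)
qed

definition beatty_ratio_sum :: "real \<Rightarrow> nat \<Rightarrow> nat \<Rightarrow> real" where
  "beatty_ratio_sum a k Q = (\<Sum>q=1..Q. real (beatty a (q + k)) / real (beatty a q) - 1)"

lemma beatty_error_Suc:
  assumes "a > 1" "a \<notin> \<rat>"
  shows "real n * (beatty_ratio_sum a k (beatty (inverse a) (Suc n))
                   - beatty_ratio_sum a k (beatty (inverse a) n))
         = beatty_error a k n + real k - beatty_error a k (Suc n)"
proof -
  have a0: "a > 0" using assms(1) by simp
  define p where "p = beatty (inverse a) n"
  define A where "A = (\<lambda>q. real (beatty a q))"
  have error_Suc: "beatty_error a k (Suc n) - beatty_error a k n
      = real k - ((\<Sum>j=1..k. A (beatty (inverse a) (Suc n) + j)) - (\<Sum>j=1..k. A (p + j)))"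
    unfolding beatty_error_eq[OF a0] A_def p_def by (simp add: algebra_simps)
  from assms show ?thesis
  proof (cases rule: beatty_inverse_Suc_cases[where n=n])
    case 1
    then show ?thesis using error_Suc unfolding p_def by simp
  next
    case 2
    have beatty_Suc_p: "beatty a (Suc p) = n" using 2 unfolding p_def by simp
    then have "n \<noteq> 0" using le_beatty[of a "Suc p"] assms(1) by simp
    then have "real n * (beatty_ratio_sum a k (Suc p) - beatty_ratio_sum a k p) = A (Suc p + k) - A (Suc p)"
      unfolding beatty_ratio_sum_def A_def by (simp add: beatty_Suc_p field_simps)
    moreover have "(\<Sum>j=1..k. A (Suc p + j)) - (\<Sum>j=1..k. A (p + j)) = A (Suc p + k) - A (Suc p)"
      by (induction k) simp_all
    ultimately show ?thesis using 2 error_Suc unfolding p_def[symmetric] by simp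
  qed
qed

lemma sum_beatty_error_series:
  assumes "a > 1" "a \<notin> \<rat>"
  shows "(\<Sum>m<M. beatty_error a k (Suc m + 1) / (real (Suc m) * real (Suc m + 1)))
    = beatty_error a k 1 - beatty_error a k (M + 1) / real (M + 1) + real k * harm M
      - beatty_ratio_sum a k (beatty (inverse a) (M + 1))"
proof -
  define F where "F M = beatty_error a k (M + 1) / real (M + 1)
    + beatty_ratio_sum a k (beatty (inverse a) (M + 1)) - real k * harm M" for M
  have "F m - F (Suc m) = beatty_error a k (Suc m + 1) / (real (Suc m) * real (Suc m + 1))" for m
  proof -
    define n where "n = real (Suc m)"
    let ?e1 = "beatty_error a k (Suc m)" and ?e2 = "beatty_error a k (Suc (Suc m))"
    let ?D1 = "beatty_ratio_sum a k (beatty (inverse a) (Suc m))"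
    let ?D2 = "beatty_ratio_sum a k (beatty (inverse a) (Suc (Suc m)))"
    have n: "n \<noteq> 0" "n + 1 \<noteq> 0" unfolding n_def by simp_all
    have "?D2 - ?D1 = (?e1 + real k - ?e2) / n"
      using beatty_error_Suc[OF assms, of "Suc m" k] n unfolding n_def by (simp add: field_simps)
    moreover have "F m - F (Suc m) = ?e1 / n - ?e2 / (n + 1) - (?D2 - ?D1) + real k / n"
      unfolding F_def harm_Suc n_def by (simp add: divide_inverse algebra_simps)
    ultimately have "F m - F (Suc m) = ?e1 / n - ?e2 / (n + 1) - (?e1 + real k - ?e2) / n + real k / n"
      by simp
    also have "\<dots> = ?e2 / n - ?e2 / (n + 1)" by (simp add: diff_divide_distrib add_divide_distrib)
    also have "\<dots> = ?e2 / (n * (n + 1))" using n by (simp add: field_simps)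
    finally show ?thesis unfolding n_def by simp
  qed
  then have "(\<Sum>m<M. beatty_error a k (Suc m + 1) / (real (Suc m) * real (Suc m + 1))) = F 0 - F M"
    by (simp add: sum_lessThan_telescope'[symmetric])
  moreover have "beatty (inverse a) 1 = 0"
    using beatty_inverse_Suc_beatty[OF assms, of 0] by (simp add: beatty_def)
  ultimately show ?thesis by (simp add: F_def beatty_ratio_sum_def harm_def)
qed

lemma summable_bounded_div_Suc_mult_Suc:
  assumes "\<And>m. \<bar>f m\<bar> \<le> C"
  shows "summable (\<lambda>m. f m / (real (Suc m) * real (Suc m + 1)))"
proof (rule summable_comparison_test'[where g="\<lambda>m. C * inverse (real (Suc m) ^ 2)"])
  show "summable (\<lambda>m. C * inverse (real (Suc m) ^ 2))"
    using summable_Suc_iff[of "\<lambda>n. inverse (real n ^ 2)"] inverse_power_summable[of 2, where 'a=real]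
    by (intro summable_mult) simp
  fix m :: nat
  have "\<bar>f m\<bar> / (real (Suc m) * real (Suc m + 1)) \<le> C / (real (Suc m) * real (Suc m + 1))"
    by (intro divide_right_mono assms) simp
  also have "\<dots> \<le> C / real (Suc m) ^ 2"
    using assms[of m] by (intro divide_left_mono) (auto simp: power2_eq_square)
  finally show "norm (f m / (real (Suc m) * real (Suc m + 1))) \<le> C * inverse (real (Suc m) ^ 2)"
    by (simp add: abs_mult field_simps)
qed

lemma summable_beatty_error_series:
  assumes "a > 0"
  shows "summable (\<lambda>m. beatty_error a k (Suc m + 1) / (real (Suc m) * real (Suc m + 1)))"
  using beatty_error_bounds[OF assms]
  by (intro summable_bounded_div_Suc_mult_Suc[where C="a * real k + real k"]) (simp add: abs_le_iff)

lemma sum_beatty_ratio_minus_harm: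
  "(\<Sum>m<Q. real (beatty a (Suc m + k)) / real (beatty a (Suc m)) - 1 - real k / real (Suc m))
    = beatty_ratio_sum a k Q - real k * harm Q"
  by (induction Q) (simp_all add: beatty_ratio_sum_def harm_def algebra_simps divide_inverse)

lemma beatty_error_over_Suc_tendsto:
  assumes "a > 0"
  shows "(\<lambda>n. beatty_error a k (n + 1) / real (n + 1)) \<longlonglongrightarrow> 0"
proof (rule Lim_null_comparison)
  show "(\<lambda>n. (a * real k + real k) / real (Suc n)) \<longlonglongrightarrow> 0"
    using LIMSEQ_Suc[OF lim_const_over_n] by simp
  show "\<forall>\<^sub>F n in sequentially.
      norm (beatty_error a k (n + 1) / real (n + 1)) \<le> (a * real k + real k) / real (Suc n)"
    using beatty_error_bounds[OF assms] by (simp add: divide_right_mono)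
qed

lemma beatty_ratio_sums:
  assumes "a > 1" "a \<notin> \<rat>"
  shows "(\<lambda>m. real (beatty a (Suc m + k)) / real (beatty a (Suc m)) - 1 - real k / real (Suc m)) sums
    (real k + real k * ln a + (\<Sum>j=1..k. frac (real j * frac a))
     - (\<Sum>m. beatty_error a k (Suc m + 1) / (real (Suc m) * real (Suc m + 1))))"
proof -
  define w where "w m = beatty_error a k (Suc m + 1) / (real (Suc m) * real (Suc m + 1))" for m
  have a0: "a > 0" using assms(1) by simp
  have beatty_lim: "filterlim (beatty a) at_top sequentially"
    using assms(1) by (simp add: filterlim_beatty_at_top)
  have partial: "(\<Sum>m<Q. real (beatty a (Suc m + k)) / real (beatty a (Suc m)) - 1 - real k / real (Suc m))
    = beatty_error a k 1 + real k * (harm (beatty a Q) - harm Q) - (\<Sum>m<beatty a Q. w m)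
      - beatty_error a k (beatty a Q + 1) / real (beatty a Q + 1)" for Q
    using sum_beatty_ratio_minus_harm[of a k Q] sum_beatty_error_series[OF assms, of k "beatty a Q"]
      beatty_inverse_Suc_beatty[OF assms, of Q]
    unfolding w_def by (simp add: algebra_simps)
  have "(\<lambda>Q. beatty_error a k 1 + real k * (harm (beatty a Q) - harm Q) - (\<Sum>m<beatty a Q. w m)
      - beatty_error a k (beatty a Q + 1) / real (beatty a Q + 1))
    \<longlonglongrightarrow> beatty_error a k 1 + real k * ln a - suminf w - 0"
    using harm_diff_tendsto_ln[OF beatty_lim beatty_div_tendsto] a0
      filterlim_compose[OF summable_LIMSEQ[OF summable_beatty_error_series[OF a0]] beatty_lim]
      filterlim_compose[OF beatty_error_over_Suc_tendsto[OF a0] beatty_lim]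
    unfolding w_def by (intro tendsto_intros) (simp_all add: o_def)
  then show ?thesis
    unfolding sums_def partial beatty_error_1[OF assms(1)] w_def by (simp add: algebra_simps)
qed

lemma suminf_beatty_error_series_diff:
  assumes "a > 0" "b > 0"
  shows "(\<Sum>m. beatty_error a k (Suc m + 1) / (real (Suc m) * real (Suc m + 1)))
       - (\<Sum>m. beatty_error b k (Suc m + 1) / (real (Suc m) * real (Suc m + 1)))
    = (\<Sum>m. (a * real k * frac (inverse a * real (Suc m + 1))
              - b * real k * frac (inverse b * real (Suc m + 1))) / (real (Suc m) * real (Suc m + 1)))
    + (\<Sum>m. ((\<Sum>j=1..k. frac (frac a * (real_of_int \<lfloor>inverse a * real (Suc m + 1)\<rfloor> + real j)))
            - (\<Sum>j=1..k. frac (frac b * (real_of_int \<lfloor>inverse b * real (Suc m + 1)\<rfloor> + real j))))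
           / (real (Suc m) * real (Suc m + 1)))"
    (is "suminf ?wa - suminf ?wb = suminf ?u + suminf ?v")
proof -
  have "summable ?u"
    using assms
    by (intro summable_bounded_div_Suc_mult_Suc[where C="a * real k + b * real k"] abs_mult_frac_diff_le)
      simp_all
  moreover have "summable ?v"
    using abs_sum_frac_diff_le[of _ "{1..k}"]
    by (intro summable_bounded_div_Suc_mult_Suc[where C="real k"]) simp
  moreover have "?wa m - ?wb m = ?u m + ?v m" for m
    unfolding beatty_error_def by (simp add: diff_divide_distrib add_divide_distrib)
  ultimately show ?thesis
    using summable_beatty_error_series[OF assms(1)] summable_beatty_error_series[OF assms(2)]
    by (simp add: suminf_diff suminf_add)
qed

theorem theorem3:
  fixes a b :: real and k :: nat
  assumes "a > 1" and "b > 1" and "a \<notin> \<rat>" and "b \<notin> \<rat>" and "k > 0"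
  defines "A \<equiv> (\<lambda>n::nat. real_of_int \<lfloor>a * real n\<rfloor>)"
      and "B \<equiv> (\<lambda>n::nat. real_of_int \<lfloor>b * real n\<rfloor>)"
      and "A' \<equiv> (\<lambda>n::nat. real_of_int \<lfloor>inverse a * real n\<rfloor>)"
      and "B' \<equiv> (\<lambda>n::nat. real_of_int \<lfloor>inverse b * real n\<rfloor>)"
  shows "(\<lambda>m. let n = Suc m in A (n + k) / A n - B (n + k) / B n) sums
           (real k * (ln a - ln b)
            + (\<Sum>j=1..k. frac (real j * frac a) - frac (real j * frac b))
            - (\<Sum>m. let n = Suc m in
                 (a * real k * frac (inverse a * real (n + 1))
                  - b * real k * frac (inverse b * real (n + 1))) / (real n * real (n + 1)))
            - (\<Sum>m. let n = Suc m in
                 ((\<Sum>j=1..k. frac (frac a * (A' (n + 1) + real j)))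
                  - (\<Sum>j=1..k. frac (frac b * (B' (n + 1) + real j)))) / (real n * real (n + 1))))"
proof -
  have a0: "a > 0" and b0: "b > 0" using assms(1,2) by simp_all
  have "(\<lambda>m. let n = Suc m in A (n + k) / A n - B (n + k) / B n)
    = (\<lambda>m. (real (beatty a (Suc m + k)) / real (beatty a (Suc m)) - 1 - real k / real (Suc m))
         - (real (beatty b (Suc m + k)) / real (beatty b (Suc m)) - 1 - real k / real (Suc m)))"
    using a0 b0 by (simp add: A_def B_def Let_def of_nat_beatty add.assoc)
  then show ?thesis
    using sums_diff[OF beatty_ratio_sums[OF assms(1,3)] beatty_ratio_sums[OF assms(2,4)], of k k]
      suminf_beatty_error_series_diff[OF a0 b0, of k]
    unfolding A'_def B'_def Let_def by (simp add: sum_subtractf algebra_simps)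
qed

end
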